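(* Let $\mu>0$ and $\lambda_1>0$, and consider the system $$\frac{dx}{dt}=\lambda_1\bigl(2\mu y-4\mu xy-2x^2-2xy+x\bigr),\qquad \frac{dy}{dt}=\lambda_1\bigl(\mu y-4\mu y^2-2xy-2y^2+y\bigr).$$ Let $Q\subset\mathbb{R}^2$ be the closed quadrangle defined by $y\ge x/2$, $y\ge 1/2-x$, $y\le 1/3$, $y\le 1/2-x/2$, and let $(x_c,y_c)=\left(\frac{\mu+1}{2\mu+3},\frac{\mu+1}{4\mu+6}\right)$. Then $(x_c,y_c)$ is asymptotically stable in $Q$: for every initial condition $(x_0,y_0)\in Q$, the solution satisfies $\lim_{t\to\infty}(x(t),y(t))=(x_c,y_c)$.
   Context: $Q$ is the domain of convex mosaics in the inverse symbolic plane, with vertices $(1/3,1/6)$, $(1/2,1/4)$, $(1/3,1/3)$, $(1/6,1/3)$. *)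

theory Defs
  imports "HOL-Analysis.Analysis"
begin

definition quadQ :: "(real \<times> real) set" where
  "quadQ = {(x, y). y \<ge> x / 2 \<and> y \<ge> 1/2 - x \<and> y \<le> 1/3 \<and> y \<le> 1/2 - x / 2}"

definition fx :: "real \<Rightarrow> real \<Rightarrow> real \<Rightarrow> real \<Rightarrow> real" where
  "fx \<mu> lam x y = lam * (2*\<mu>*y - 4*\<mu>*x*y - 2*x^2 - 2*x*y + x)"

definition fy :: "real \<Rightarrow> real \<Rightarrow> real \<Rightarrow> real \<Rightarrow> real" where
  "fy \<mu> lam x y = lam * (\<mu>*y - 4*\<mu>*y^2 - 2*x*y - 2*y^2 + y)"

end

theory Submission
  imports Defs "HOL-Real_Asymp.Real_Asymp"
begin

text \<open>With \<open>u = x - 2 y\<close> and \<open>S = 2 x + 2 y + 4 \<mu> y\<close> the system reads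
  \<open>u' = lam (1 - S) u\<close>, \<open>y' = lam (\<mu> + 1 - S) y\<close>. The two growth rates differ by the
  constant \<open>lam \<mu>\<close>, so \<open>u = k y exp (- lam \<mu> t)\<close> with \<open>k = u(0) / y(0)\<close>.
  Substituting this first integral turns the \<open>y\<close>-equation into the Bernoulli equation
  \<open>y' = lam (\<mu> + 1) y - lam (4 \<mu> + 6 + 2 k exp (- lam \<mu> t)) y\<^sup>2\<close>, whose reciprocal solves a
  linear equation and is therefore known in closed form; it tends to \<open>(4 \<mu> + 6) / (\<mu> + 1)\<close>.
  Both identifications rest on uniqueness for scalar linear equations (a Gronwall argument).\<close>

lemma linear_ode_vanishes:
  fixes h a :: "real \<Rightarrow> real"
  assumes cont: "continuous_on {0..} a"
    and deriv: "\<And>t. t \<ge> 0 \<Longrightarrow> (h has_real_derivative a t * h t) (at t within {0..})"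
    and init: "h 0 = 0" and T: "T \<ge> 0"
  shows "h T = 0"
proof -
  have "continuous_on {0..T} a"
    using cont by (rule continuous_on_subset) auto
  then have "\<exists>s\<in>{0..T}. \<forall>t\<in>{0..T}. a t \<le> a s"
    using T by (intro continuous_attains_sup) auto
  then obtain M where M: "\<And>t. t \<in> {0..T} \<Longrightarrow> a t \<le> M"
    by blast
  define k where "k t = (h t)\<^sup>2 * exp (-2*M*t)" for t
  have k_deriv: "(k has_real_derivative 2 * (h t)\<^sup>2 * (a t - M) * exp (-2*M*t)) (at t within {0..})"
    if "t \<ge> 0" for t
    unfolding k_def power2_eq_square
    by (rule derivative_eq_intros deriv[OF that] refl)+ (simp add: algebra_simps)
  have "k T \<le> k 0"
  proof (rule DERIV_nonpos_imp_decreasing_open[OF T])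
    fix t assume t: "0 < t" "t < T"
    have "at t within {0..} = at t"
      using t by (intro at_within_open_subset[where S="{0<..}"]) auto
    then have "(k has_real_derivative 2 * (h t)\<^sup>2 * (a t - M) * exp (-2*M*t)) (at t)"
      using k_deriv[of t] t by simp
    moreover have "2 * (h t)\<^sup>2 * (a t - M) * exp (-2*M*t) \<le> 0"
      using M[of t] t by (simp add: mult_nonneg_nonpos2 mult_nonpos_nonneg)
    ultimately show "\<exists>D. (k has_real_derivative D) (at t) \<and> D \<le> 0"
      by blast
  next
    have "continuous_on {0..} k"
      using k_deriv by (intro DERIV_continuous_on) auto
    then show "continuous_on {0..T} k"
      by (rule continuous_on_subset) auto
  qed
  then have "(h T)\<^sup>2 * exp (-2*M*T) \<le> 0"
    using init by (simp add: k_def)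
  then show ?thesis
    by (simp add: mult_le_0_iff)
qed

lemma linear_odes_proportional:
  fixes u v a :: "real \<Rightarrow> real" and m :: real
  assumes cont: "continuous_on {0..} a"
    and u_deriv: "\<And>t. t \<ge> 0 \<Longrightarrow> (u has_real_derivative a t * u t) (at t within {0..})"
    and v_deriv: "\<And>t. t \<ge> 0 \<Longrightarrow> (v has_real_derivative (a t + m) * v t) (at t within {0..})"
    and "t \<ge> 0"
  shows "u t * v 0 = u 0 * v t * exp (- (m * t))"
proof -
  define h where "h s = u s * v 0 - u 0 * v s * exp (- (m * s))" for s
  have "(h has_real_derivative a s * h s) (at s within {0..})" if "s \<ge> 0" for s
    unfolding h_def
    by (rule derivative_eq_intros u_deriv[OF that] v_deriv[OF that] refl)+ (simp add: algebra_simps)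
  then have "h t = 0"
    by (rule linear_ode_vanishes[rotated]) (auto intro!: continuous_intros cont simp: h_def \<open>t \<ge> 0\<close>)
  then show ?thesis
    by (simp add: h_def)
qed

lemma bernoulli_ode_reciprocal:
  fixes y z a b :: "real \<Rightarrow> real"
  assumes cont: "continuous_on {0..} b"
    and y_deriv: "\<And>t. t \<ge> 0 \<Longrightarrow> (y has_real_derivative a t * y t - b t * (y t)\<^sup>2) (at t within {0..})"
    and z_deriv: "\<And>t. t \<ge> 0 \<Longrightarrow> (z has_real_derivative b t - a t * z t) (at t within {0..})"
    and init: "y 0 * z 0 = 1" and "t \<ge> 0"
  shows "y t * z t = 1"
proof -
  define w where "w s = y s * z s - 1" for s
  have "continuous_on {0..} y"
    using y_deriv by (intro DERIV_continuous_on) auto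
  have "w t = 0"
  proof (rule linear_ode_vanishes[where a = "\<lambda>s. - (b s * y s)", OF _ _ _ \<open>t \<ge> 0\<close>])
    show "continuous_on {0..} (\<lambda>s. - (b s * y s))"
      by (intro continuous_intros cont \<open>continuous_on {0..} y\<close>)
    show "(w has_real_derivative - (b s * y s) * w s) (at s within {0..})" if "s \<ge> 0" for s
      unfolding w_def
      by (rule derivative_eq_intros y_deriv[OF that] z_deriv[OF that] refl)+
        (simp add: power2_eq_square algebra_simps)
    show "w 0 = 0"
      using init by (simp add: w_def)
  qed
  then show ?thesis
    by (simp add: w_def)
qed

lemma fy_factor: "fy \<mu> lam x y = lam * (\<mu> + 1 - 2*x - 2*y - 4*\<mu>*y) * y"
  by (simp add: fy_def power2_eq_square algebra_simps)

lemma fx_minus_fy_factor: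
  "fx \<mu> lam x y - 2 * fy \<mu> lam x y = lam * (1 - 2*x - 2*y - 4*\<mu>*y) * (x - 2*y)"
  by (simp add: fx_def fy_def power2_eq_square algebra_simps)

lemma tendsto_exp_neg_mult_at_top: "a > 0 \<Longrightarrow> ((\<lambda>t. exp (- (a * t))) \<longlongrightarrow> 0) at_top"
  for a :: real
  by real_asymp

text \<open>The solution of \<open>z' = lam (4 \<mu> + 6 + 2 k exp (- lam \<mu> t)) - lam (\<mu> + 1) z\<close>,
  \<open>z(0) = z0\<close>; for \<open>z0 = 1 / y(0)\<close> it is \<open>1 / y\<close>.\<close>

definition recip_y :: "real \<Rightarrow> real \<Rightarrow> real \<Rightarrow> real \<Rightarrow> real \<Rightarrow> real" where
  "recip_y \<mu> lam z0 k t =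
     z0 * exp (-(lam*(\<mu>+1)*t)) + (4*\<mu>+6) / (\<mu>+1) * (1 - exp (-(lam*(\<mu>+1)*t)))
     + 2*k * (exp (-(lam*\<mu>*t)) - exp (-(lam*(\<mu>+1)*t)))"

lemma recip_y_0 [simp]: "recip_y \<mu> lam z0 k 0 = z0"
  by (simp add: recip_y_def)

lemma recip_y_deriv:
  assumes "\<mu> + 1 \<noteq> 0"
  shows "(recip_y \<mu> lam z0 k has_real_derivative
           lam * (4*\<mu>+6 + 2*k*exp (-(lam*\<mu>*t))) - lam*(\<mu>+1) * recip_y \<mu> lam z0 k t) (at t within S)"
  unfolding recip_y_def[abs_def]
  by (rule derivative_eq_intros refl)+ (use assms in \<open>simp add: field_simps\<close>)

lemma recip_y_tendsto:
  assumes "\<mu> > 0" and "lam > 0"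
  shows "(recip_y \<mu> lam z0 k \<longlongrightarrow> (4*\<mu>+6) / (\<mu>+1)) at_top"
proof -
  have decay: "((\<lambda>t. exp (-(lam*(\<mu>+1)*t))) \<longlongrightarrow> 0) at_top" "((\<lambda>t. exp (-(lam*\<mu>*t))) \<longlongrightarrow> 0) at_top"
    using assms by (simp_all add: tendsto_exp_neg_mult_at_top)
  have "(recip_y \<mu> lam z0 k \<longlongrightarrow> z0 * 0 + (4*\<mu>+6) / (\<mu>+1) * (1 - 0) + 2*k * (0 - 0)) at_top"
    unfolding recip_y_def[abs_def] by (intro tendsto_add tendsto_mult tendsto_diff tendsto_const decay)
  then show ?thesis
    by simp
qed

locale mosaic_trajectory =
  fixes \<mu> lam :: real and x y :: "real \<Rightarrow> real"
  assumes x_deriv: "\<And>t. t \<ge> 0 \<Longrightarrow> (x has_real_derivative fx \<mu> lam (x t) (y t)) (at t within {0..})"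
    and y_deriv: "\<And>t. t \<ge> 0 \<Longrightarrow> (y has_real_derivative fy \<mu> lam (x t) (y t)) (at t within {0..})"
    and y0_nonzero: "y 0 \<noteq> 0"
begin

lemma continuous_on_x: "continuous_on {0..} x"
  using x_deriv by (intro DERIV_continuous_on) auto

lemma continuous_on_y: "continuous_on {0..} y"
  using y_deriv by (intro DERIV_continuous_on) auto

lemma first_integral:
  assumes "t \<ge> 0"
  shows "x t = 2 * y t + (x 0 - 2 * y 0) / y 0 * y t * exp (-(lam*\<mu>*t))"
proof -
  define a where "a s = lam * (1 - 2 * x s - 2 * y s - 4*\<mu> * y s)" for s
  have "(x t - 2 * y t) * y 0 = (x 0 - 2 * y 0) * y t * exp (-(lam*\<mu>*t))"
  proof (rule linear_odes_proportional[OF _ _ _ assms])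
    show "continuous_on {0..} a"
      unfolding a_def by (intro continuous_intros continuous_on_x continuous_on_y)
    show "((\<lambda>s. x s - 2 * y s) has_real_derivative a s * (x s - 2 * y s)) (at s within {0..})"
      if "s \<ge> 0" for s
      using x_deriv[OF that] y_deriv[OF that] fx_minus_fy_factor[of \<mu> lam "x s" "y s"]
      by (auto intro!: derivative_eq_intros simp: a_def)
    show "(y has_real_derivative (a s + lam*\<mu>) * y s) (at s within {0..})" if "s \<ge> 0" for s
      using y_deriv[OF that] by (simp add: fy_factor a_def algebra_simps)
  qed
  then have "x t - 2 * y t = (x 0 - 2 * y 0) * y t * exp (-(lam*\<mu>*t)) / y 0"
    using y0_nonzero by (simp add: eq_divide_eq)
  then show ?thesis
    by simp
qed

lemma y_mult_recip_y:
  assumes "\<mu> + 1 \<noteq> 0" and "t \<ge> 0"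
  shows "y t * recip_y \<mu> lam (1 / y 0) ((x 0 - 2 * y 0) / y 0) t = 1"
proof -
  define k where "k = (x 0 - 2 * y 0) / y 0"
  define b where "b s = lam * (4*\<mu>+6 + 2*k*exp (-(lam*\<mu> * s)))" for s
  show ?thesis
    unfolding k_def[symmetric]
  proof (rule bernoulli_ode_reciprocal[OF _ _ _ _ \<open>t \<ge> 0\<close>])
    show "continuous_on {0..} b"
      unfolding b_def by (intro continuous_intros)
    show "(y has_real_derivative lam*(\<mu>+1) * y s - b s * (y s)\<^sup>2) (at s within {0..})"
      if "s \<ge> 0" for s
      using y_deriv[OF that] first_integral[OF that]
      by (simp add: fy_factor b_def k_def power2_eq_square algebra_simps)
    show "(recip_y \<mu> lam (1 / y 0) k has_real_derivative b s - lam*(\<mu>+1) * recip_y \<mu> lam (1 / y 0) k s)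
        (at s within {0..})" for s
      unfolding b_def using recip_y_deriv[OF assms(1)] .
    show "y 0 * recip_y \<mu> lam (1 / y 0) k 0 = 1"
      using y0_nonzero by simp
  qed
qed

lemma tendsto_y:
  assumes "\<mu> > 0" and "lam > 0"
  shows "(y \<longlongrightarrow> (\<mu>+1) / (4*\<mu>+6)) at_top"
proof -
  let ?z = "recip_y \<mu> lam (1 / y 0) ((x 0 - 2 * y 0) / y 0)"
  have "\<forall>\<^sub>F t in at_top. y t = inverse (?z t)"
    using eventually_ge_at_top[of "0::real"]
  proof eventually_elim
    case (elim t)
    have "\<mu> + 1 \<noteq> 0"
      using assms(1) by simp
    then show ?case
      using y_mult_recip_y[OF _ elim] by (metis inverse_unique mult.commute)
  qed
  moreover have "((\<lambda>t. inverse (?z t)) \<longlongrightarrow> inverse ((4*\<mu>+6) / (\<mu>+1))) at_top"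
    using recip_y_tendsto[OF assms] assms(1) by (intro tendsto_inverse) auto
  ultimately show ?thesis
    by (simp add: tendsto_cong)
qed

lemma tendsto_x:
  assumes "\<mu> > 0" and "lam > 0"
  shows "(x \<longlongrightarrow> 2 * ((\<mu>+1) / (4*\<mu>+6))) at_top"
proof -
  let ?k = "(x 0 - 2 * y 0) / y 0"
  have "\<forall>\<^sub>F t in at_top. x t = 2 * y t + ?k * y t * exp (-(lam*\<mu>*t))"
    using eventually_ge_at_top[of "0::real"] by eventually_elim (rule first_integral)
  moreover have "((\<lambda>t. 2 * y t + ?k * y t * exp (-(lam*\<mu>*t)))
      \<longlongrightarrow> 2 * ((\<mu>+1) / (4*\<mu>+6)) + ?k * ((\<mu>+1) / (4*\<mu>+6)) * 0) at_top"
    by (intro tendsto_intros tendsto_y[OF assms] tendsto_exp_neg_mult_at_top) (use assms in simp)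
  ultimately show ?thesis
    by (simp add: tendsto_cong)
qed

end

theorem lemma6:
  fixes \<mu> lam :: real and x y :: "real \<Rightarrow> real"
  assumes "\<mu> > 0" and "lam > 0"
    and "(x 0, y 0) \<in> quadQ"
    and "\<And>t. t \<ge> 0 \<Longrightarrow> (x has_real_derivative fx \<mu> lam (x t) (y t)) (at t within {0..})"
    and "\<And>t. t \<ge> 0 \<Longrightarrow> (y has_real_derivative fy \<mu> lam (x t) (y t)) (at t within {0..})"
  shows "((\<lambda>t. (x t, y t)) \<longlongrightarrow> ((\<mu>+1)/(2*\<mu>+3), (\<mu>+1)/(4*\<mu>+6))) at_top"
proof -
  have "y 0 \<noteq> 0"
    using assms(3) by (auto simp: quadQ_def)
  with assms(4,5) interpret mosaic_trajectory \<mu> lam x y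
    by unfold_locales
  have "2 * ((\<mu>+1) / (4*\<mu>+6)) = (\<mu>+1) / (2*\<mu>+3)"
    using assms(1) by (simp add: field_simps)
  then show ?thesis
    using tendsto_Pair[OF tendsto_x[OF assms(1,2)] tendsto_y[OF assms(1,2)]] by simp
qed

end
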